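(* Let $n\ge1$, $m\ge1$ and let $v$ be a vertex of $Y_{n,m}$, regarded also as a vertex of $Z_{n,m}$. Then $d_{Z_{n,m}}(v,0)=d_{Y_{n,m}}(v,0)$.
   Context: The Yoke graph $Y_{n,m}$ has vertices the tuples $v=(v_0,\dots,v_{m+1})$ with $v_0,v_{m+1}\in\mathbb{Z}_n$, $v_1,\dots,v_m\in\{0,1\}$, $\sum v_i\equiv0\pmod n$; the dYoke graph $Z_{n,m}$ is defined identically but with $v_1,\dots,v_m\in\{-1,0,1\}$, so the vertex set of $Y_{n,m}$ is contained in that of $Z_{n,m}$. In both, $u\sim v$ iff there is $0\le i\le m$ with $u_j=v_j$ for $j\notin\{i,i+1\}$ and either ($u_i=v_i+1$, $u_{i+1}=v_{i+1}-1$) or ($u_i=v_i-1$, $u_{i+1}=v_{i+1}+1$), buckets mod $n$. $0$ is the all-zero vertex. *)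

theory Defs
  imports Main "HOL-Library.Extended_Nat"
begin

text \<open>Vertices are integer lists v = [v_0, ..., v_(m+1)] of length m+2.
  The buckets v_0, v_(m+1) are residues represented in {0..<n}.\<close>

definition yoke_vertex :: "nat \<Rightarrow> nat \<Rightarrow> int list \<Rightarrow> bool" where
  "yoke_vertex n m v \<longleftrightarrow> length v = m + 2 \<and>
     v ! 0 \<in> {0..<int n} \<and> v ! (m+1) \<in> {0..<int n} \<and>
     (\<forall>i\<in>{1..m}. v ! i \<in> {0, 1}) \<and> sum_list v mod int n = 0"

definition dyoke_vertex :: "nat \<Rightarrow> nat \<Rightarrow> int list \<Rightarrow> bool" where
  "dyoke_vertex n m v \<longleftrightarrow> length v = m + 2 \<and>
     v ! 0 \<in> {0..<int n} \<and> v ! (m+1) \<in> {0..<int n} \<and>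
     (\<forall>i\<in>{1..m}. v ! i \<in> {-1, 0, 1}) \<and> sum_list v mod int n = 0"

definition coord_add :: "nat \<Rightarrow> nat \<Rightarrow> nat \<Rightarrow> int \<Rightarrow> int \<Rightarrow> int" where
  "coord_add n m k x d = (if k = 0 \<or> k = m + 1 then (x + d) mod int n else x + d)"

definition yoke_adj :: "nat \<Rightarrow> nat \<Rightarrow> int list \<Rightarrow> int list \<Rightarrow> bool" where
  "yoke_adj n m u v \<longleftrightarrow> length u = m + 2 \<and> length v = m + 2 \<and>
     (\<exists>i\<le>m. (\<forall>j<m+2. j \<noteq> i \<and> j \<noteq> i + 1 \<longrightarrow> u ! j = v ! j) \<and>
        ((u ! i = coord_add n m i (v ! i) 1 \<and> u ! (i+1) = coord_add n m (i+1) (v ! (i+1)) (-1)) \<or>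
         (u ! i = coord_add n m i (v ! i) (-1) \<and> u ! (i+1) = coord_add n m (i+1) (v ! (i+1)) 1)))"

definition graph_edges :: "('a \<Rightarrow> bool) \<Rightarrow> ('a \<Rightarrow> 'a \<Rightarrow> bool) \<Rightarrow> ('a \<times> 'a) set" where
  "graph_edges V A = {(u, v). V u \<and> V v \<and> A u v}"

text \<open>Graph distance (infinity if not connected): least length of a walk.\<close>
definition graph_dist :: "('a \<Rightarrow> bool) \<Rightarrow> ('a \<Rightarrow> 'a \<Rightarrow> bool) \<Rightarrow> 'a \<Rightarrow> 'a \<Rightarrow> enat" where
  "graph_dist V A u v = (INF k \<in> {k. (u, v) \<in> graph_edges V A ^^ k}. enat k)"

definition Y_dist :: "nat \<Rightarrow> nat \<Rightarrow> int list \<Rightarrow> int list \<Rightarrow> enat" where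
  "Y_dist n m = graph_dist (yoke_vertex n m) (yoke_adj n m)"

definition Z_dist :: "nat \<Rightarrow> nat \<Rightarrow> int list \<Rightarrow> int list \<Rightarrow> enat" where
  "Z_dist n m = graph_dist (dyoke_vertex n m) (yoke_adj n m)"

definition zero_vertex :: "nat \<Rightarrow> int list" where
  "zero_vertex m = replicate (m + 2) 0"

end

theory Submission
  imports Defs
begin

text \<open>Reaching 0 from v is a flow problem on the path of positions 0, ..., m+1. If c units cross
  the first edge into bucket 0 (so n divides c + v_0), then c - P_j units cross the edge between
  positions j and j+1, where P_j = v_1 + ... + v_j. A single move changes exactly one of these edge
  flows by one (a move on the first edge also shifts c), so every walk to 0, whatever the vertex
  set, is at least as long as the flow cost, the sum of the |c - P_j|, for some admissible c.
  Conversely, from a vertex of Y_{n,m} with positive flow cost some move stays in Y_{n,m} and lowers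
  the cost by one: if c > 0, shift the first 1 (or, if there is none, a unit of bucket m+1) one step
  towards bucket 0; if c < P_m, shift the last 1 (or, if there is none, a unit of bucket 0) one step
  towards bucket m+1; otherwise all P_j vanish and the cost is 0. Hence the distance in Y_{n,m} is at
  most the flow cost attached to any walk in Z_{n,m}, and so at most its length.\<close>

lemma sum_list_update_eq:
  "i < length xs \<Longrightarrow> sum_list (xs[i := x]) = sum_list xs - xs ! i + (x :: 'a :: ab_group_add)"
  by (induction xs arbitrary: i) (auto split: nat.splits)

lemma dvd_atLeastLessThan_imp_zero: "int n dvd x \<Longrightarrow> x \<in> {0..<int n} \<Longrightarrow> x = 0"
  using zdvd_imp_le by fastforce

lemma zeros_then_one:
  fixes f :: "nat \<Rightarrow> int"
  assumes "\<forall>k\<in>{1..m}. f k \<in> {0, 1}"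
  shows "\<exists>i\<le>m. (\<forall>k\<in>{1..i}. f k = 0) \<and> (i < m \<longrightarrow> f (Suc i) = 1)"
  using assms
proof (induction m)
  case 0
  then show ?case by auto
next
  case (Suc m)
  then obtain i where i: "i \<le> m" "\<forall>k\<in>{1..i}. f k = 0" "i < m \<longrightarrow> f (Suc i) = 1"
    by auto
  show ?case
  proof (cases "i = m \<and> f (Suc m) = 0")
    case True
    with i show ?thesis
      by (intro exI[of _ "Suc m"]) (auto simp: le_Suc_eq)
  next
    case False
    with i Suc.prems show ?thesis
      by (intro exI[of _ i]) auto
  qed
qed

lemma one_then_zeros:
  fixes f :: "nat \<Rightarrow> int"
  assumes "\<forall>k\<in>{1..m}. f k \<in> {0, 1}"
  shows "\<exists>i\<le>m. (\<forall>k\<in>{i<..m}. f k = 0) \<and> (0 < i \<longrightarrow> f i = 1)"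
  using assms
proof (induction m)
  case 0
  then show ?case by auto
next
  case (Suc m)
  show ?case
  proof (cases "f (Suc m) = 1")
    case True
    then show ?thesis by auto
  next
    case False
    with Suc.prems have last: "f (Suc m) = 0"
      by (auto dest: bspec[of _ _ "Suc m"])
    from Suc obtain i where "i \<le> m" "\<forall>k\<in>{i<..m}. f k = 0" "0 < i \<longrightarrow> f i = 1"
      by auto
    with last show ?thesis
      by (intro exI[of _ i]) (auto simp: le_Suc_eq)
  qed
qed

lemma relpow_mono_subset:
  fixes R S :: "('a \<times> 'a) set"
  assumes "R \<subseteq> S"
  shows "(x, y) \<in> R ^^ k \<Longrightarrow> (x, y) \<in> S ^^ k"
proof (induction k arbitrary: y)
  case (Suc k)
  from Suc.prems obtain z where "(x, z) \<in> R ^^ k" "(z, y) \<in> R"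
    by (rule relpow_Suc_E)
  with Suc.IH assms show ?case
    by (blast intro: relpow_Suc_I)
qed simp

lemma graph_dist_le_by_walks:
  assumes "\<And>k. (u, v) \<in> graph_edges W B ^^ k \<Longrightarrow> \<exists>k'\<le>k. (u', v') \<in> graph_edges V A ^^ k'"
  shows "graph_dist V A u' v' \<le> graph_dist W B u v"
  unfolding graph_dist_def
proof (rule INF_greatest)
  fix k
  assume "k \<in> {k. (u, v) \<in> graph_edges W B ^^ k}"
  with assms obtain k' where "k' \<le> k" "(u', v') \<in> graph_edges V A ^^ k'"
    by blast
  then show "(INF k\<in>{k. (u', v') \<in> graph_edges V A ^^ k}. enat k) \<le> enat k"
    by (intro INF_lower2[of k']) auto
qed

definition prefix_sum :: "int list \<Rightarrow> nat \<Rightarrow> int" where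
  "prefix_sum v j = (\<Sum>k = 1..j. v ! k)"

definition flow_cost :: "nat \<Rightarrow> int list \<Rightarrow> int \<Rightarrow> int" where
  "flow_cost m v c = (\<Sum>j\<le>m. \<bar>c - prefix_sum v j\<bar>)"

definition yoke_move :: "nat \<Rightarrow> nat \<Rightarrow> int list \<Rightarrow> nat \<Rightarrow> int \<Rightarrow> int list" where
  "yoke_move n m v i d =
     v[i := coord_add n m i (v ! i) d, Suc i := coord_add n m (Suc i) (v ! Suc i) (- d)]"

lemma coord_add_cong: "int n dvd coord_add n m k x d - (x + d)"
  unfolding coord_add_def by (auto simp: mod_eq_dvd_iff[symmetric])

lemma coord_add_coord_add_neg:
  assumes "k = 0 \<or> k = m + 1 \<Longrightarrow> x \<in> {0..<int n}"
  shows "coord_add n m k (coord_add n m k x d) (- d) = x"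
  using assms by (auto simp: coord_add_def mod_simps)

lemma length_yoke_move [simp]: "length (yoke_move n m v i d) = length v"
  by (simp add: yoke_move_def)

lemma nth_yoke_move:
  assumes "length v = m + 2" "i \<le> m"
  shows "yoke_move n m v i d ! j =
    (if j = Suc i then coord_add n m (Suc i) (v ! Suc i) (- d)
     else if j = i then coord_add n m i (v ! i) d else v ! j)"
  using assms by (simp add: yoke_move_def nth_list_update)

lemma yoke_adj_imp_yoke_move:
  assumes "yoke_adj n m v u"
  obtains i d where "i \<le> m" "d \<in> {1, -1}" "length u = m + 2" "v = yoke_move n m u i d"
proof -
  from assms obtain i where i: "i \<le> m" and len: "length v = m + 2" "length u = m + 2"
    and same: "\<forall>j<m+2. j \<noteq> i \<and> j \<noteq> i + 1 \<longrightarrow> v ! j = u ! j"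
    and moved:
      "(v ! i = coord_add n m i (u ! i) 1 \<and> v ! (i+1) = coord_add n m (i+1) (u ! (i+1)) (-1)) \<or>
       (v ! i = coord_add n m i (u ! i) (-1) \<and> v ! (i+1) = coord_add n m (i+1) (u ! (i+1)) 1)"
    unfolding yoke_adj_def by blast
  from moved obtain d where d: "d \<in> {1, -1}" "v ! i = coord_add n m i (u ! i) d"
    "v ! (i+1) = coord_add n m (i+1) (u ! (i+1)) (- d)"
    by fastforce
  have "v = yoke_move n m u i d"
    by (rule nth_equalityI) (use len i same d in \<open>auto simp: nth_yoke_move\<close>)
  with i d len show thesis by (intro that)
qed

lemma yoke_adj_yoke_move:
  assumes "length v = m + 2" "i \<le> m" "d \<in> {1, -1}"
    and "v ! 0 \<in> {0..<int n}" "v ! (m + 1) \<in> {0..<int n}"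
  shows "yoke_adj n m v (yoke_move n m v i d)"
proof -
  let ?w = "yoke_move n m v i d"
  have bucket: "k = 0 \<or> k = m + 1 \<Longrightarrow> v ! k \<in> {0..<int n}" for k
    using assms by auto
  have inverse: "coord_add n m k (coord_add n m k (v ! k) e) (- e) = v ! k" for k e
    by (rule coord_add_coord_add_neg) (rule bucket)
  have undo: "v ! i = coord_add n m i (?w ! i) (- d)"
    "v ! (i + 1) = coord_add n m (i + 1) (?w ! (i + 1)) d"
    using assms(1,2) inverse[of i d] inverse[of "i + 1" "- d"]
    by (simp_all add: nth_yoke_move)
  have "\<forall>j<m+2. j \<noteq> i \<and> j \<noteq> i + 1 \<longrightarrow> v ! j = ?w ! j"
    using assms by (auto simp: nth_yoke_move)
  with assms undo show ?thesis
    unfolding yoke_adj_def by auto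
qed

lemma sum_list_yoke_move_mod:
  assumes "length v = m + 2" "i \<le> m"
  shows "sum_list (yoke_move n m v i d) mod int n = sum_list v mod int n"
proof -
  have "sum_list (yoke_move n m v i d) - sum_list v =
      (coord_add n m i (v ! i) d - (v ! i + d))
      + (coord_add n m (Suc i) (v ! Suc i) (- d) - (v ! Suc i + - d))"
    using assms by (simp add: yoke_move_def sum_list_update_eq nth_list_update)
  also have "int n dvd \<dots>"
    by (intro dvd_add coord_add_cong)
  finally show ?thesis
    by (simp add: mod_eq_dvd_iff)
qed

lemma yoke_move_admissible:
  assumes "length v = m + 2" "i \<le> m"
  shows "int n dvd c - (if i = 0 then d else 0) + yoke_move n m v i d ! 0 \<longleftrightarrow>
    int n dvd c + v ! 0"
proof -
  have "int n dvd yoke_move n m v i d ! 0 - (v ! 0 + (if i = 0 then d else 0))"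
    using assms coord_add_cong[of n m 0 "v ! 0" d] by (simp add: nth_yoke_move)
  moreover have "c - (if i = 0 then d else 0) + yoke_move n m v i d ! 0 =
      (c + v ! 0) + (yoke_move n m v i d ! 0 - (v ! 0 + (if i = 0 then d else 0)))"
    by simp
  ultimately show ?thesis
    by (simp only: dvd_add_left_iff)
qed

lemma flow_yoke_move:
  assumes "length v = m + 2" "i \<le> m" "j \<le> m"
  shows "(c - (if i = 0 then d else 0)) - prefix_sum (yoke_move n m v i d) j =
    (c - prefix_sum v j) - (if j = i then d else 0)"
proof -
  have "yoke_move n m v i d ! k = v ! k + (if k = i then d else 0) - (if k = Suc i then d else 0)"
    if "k \<in> {1..j}" for k
    using assms that by (auto simp: nth_yoke_move coord_add_def)
  then have "prefix_sum (yoke_move n m v i d) j =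
      prefix_sum v j + (if i \<in> {1..j} then d else 0) - (if Suc i \<in> {1..j} then d else 0)"
    unfolding prefix_sum_def by (simp add: sum.distrib sum_subtractf)
  then show ?thesis
    by auto
qed

lemma flow_cost_yoke_move:
  assumes "length v = m + 2" "i \<le> m"
  shows "flow_cost m (yoke_move n m v i d) (c - (if i = 0 then d else 0)) =
    flow_cost m v c - \<bar>c - prefix_sum v i\<bar> + \<bar>c - prefix_sum v i - d\<bar>"
proof -
  have "\<bar>(c - (if i = 0 then d else 0)) - prefix_sum (yoke_move n m v i d) j\<bar> =
      \<bar>c - prefix_sum v j\<bar> +
      (if j = i then \<bar>c - prefix_sum v i - d\<bar> - \<bar>c - prefix_sum v i\<bar> else 0)"
    if "j \<le> m" for j
    using flow_yoke_move[OF assms that, where c=c and d=d and n=n] by auto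
  then show ?thesis
    using assms by (simp add: flow_cost_def sum.distrib)
qed

lemma flow_cost_nonneg: "0 \<le> flow_cost m v c"
  by (simp add: flow_cost_def sum_nonneg)

lemma yoke_vertex_yoke_move:
  assumes "yoke_vertex n m v" "i \<le> m"
    and "1 \<le> i \<Longrightarrow> v ! i + d \<in> {0, 1}" and "Suc i \<le> m \<Longrightarrow> v ! Suc i - d \<in> {0, 1}"
  shows "yoke_vertex n m (yoke_move n m v i d)"
proof -
  have len: "length v = m + 2" and "0 < int n"
    using assms(1) by (auto simp: yoke_vertex_def)
  have "yoke_move n m v i d ! k \<in> {0..<int n}" if "k = 0 \<or> k = m + 1" for k
    using assms that \<open>0 < int n\<close> by (auto simp: yoke_vertex_def nth_yoke_move coord_add_def)
  moreover have "yoke_move n m v i d ! k \<in> {0, 1}" if "k \<in> {1..m}" for k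
    using assms that by (auto simp: yoke_vertex_def nth_yoke_move coord_add_def)
  ultimately show ?thesis
    using assms sum_list_yoke_move_mod[OF len assms(2)] by (auto simp: yoke_vertex_def)
qed

lemma prefix_sum_mono:
  assumes "yoke_vertex n m v" "i \<le> j" "j \<le> m"
  shows "prefix_sum v i \<le> prefix_sum v j"
proof -
  have "0 \<le> v ! k" if "k \<in> {1..m}" for k
    using assms(1) that unfolding yoke_vertex_def by fastforce
  with assms(2,3) show ?thesis
    unfolding prefix_sum_def by (intro sum_mono2) auto
qed

lemma prefix_sum_nonneg: "yoke_vertex n m v \<Longrightarrow> j \<le> m \<Longrightarrow> 0 \<le> prefix_sum v j"
  using prefix_sum_mono[of n m v 0 j] by (simp add: prefix_sum_def)

lemma nth_zero_vertex: "k < m + 2 \<Longrightarrow> zero_vertex m ! k = 0"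
  unfolding zero_vertex_def by (rule nth_replicate)

lemma flow_cost_zero_vertex: "flow_cost m (zero_vertex m) 0 = 0"
  by (simp add: flow_cost_def prefix_sum_def nth_zero_vertex)

lemma flow_cost_eq_0_imp_zero_vertex:
  assumes "yoke_vertex n m v" "int n dvd c + v ! 0" "flow_cost m v c = 0"
  shows "v = zero_vertex m"
proof -
  have len: "length v = m + 2"
    and buckets: "v ! 0 \<in> {0..<int n}" "v ! (m + 1) \<in> {0..<int n}"
    and sum: "int n dvd sum_list v"
    using assms(1) by (auto simp: yoke_vertex_def)
  have flows: "c = prefix_sum v j" if "j \<le> m" for j
    using assms(3) that unfolding flow_cost_def by (simp add: sum_nonneg_eq_0_iff)
  have "c = 0"
    using flows[of 0] by (simp add: prefix_sum_def)
  have inner: "v ! k = 0" if "k \<in> {1..m}" for k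
  proof -
    have "prefix_sum v k = prefix_sum v (k - 1) + v ! k"
      using that by (cases k) (simp_all add: prefix_sum_def)
    with flows[of k] flows[of "k - 1"] that show ?thesis
      by simp
  qed
  have first: "v ! 0 = 0"
    using assms(2) buckets(1) \<open>c = 0\<close> by (simp add: dvd_atLeastLessThan_imp_zero)
  have "sum_list v = (\<Sum>k<m + 1. v ! k) + v ! (m + 1)"
    using len by (simp add: sum_list_sum_nth atLeast0LessThan)
  also have "(\<Sum>k<m + 1. v ! k) = 0"
  proof (intro sum.neutral ballI)
    fix k
    assume "k \<in> {..<m + 1}"
    with first inner[of k] show "v ! k = 0"
      by (cases "k = 0") auto
  qed
  finally have last: "v ! (m + 1) = 0"
    using sum buckets(2) by (simp add: dvd_atLeastLessThan_imp_zero)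
  show ?thesis
  proof (rule nth_equalityI)
    fix k
    assume "k < length v"
    with len first inner last show "v ! k = zero_vertex m ! k"
      by (cases "k = 0 \<or> k = m + 1") (auto simp: nth_zero_vertex)
  qed (simp add: len zero_vertex_def)
qed

lemma flow_cost_le_walk_length:
  assumes "(v, zero_vertex m) \<in> graph_edges V (yoke_adj n m) ^^ k"
  shows "\<exists>c. int n dvd c + v ! 0 \<and> flow_cost m v c \<le> int k"
  using assms
proof (induction k arbitrary: v)
  case 0
  then show ?case
    by (intro exI[of _ 0]) (simp add: nth_zero_vertex flow_cost_zero_vertex)
next
  case (Suc k)
  from relpow_Suc_D2[OF Suc.prems]
  obtain u where edge: "(v, u) \<in> graph_edges V (yoke_adj n m)"
    and walk: "(u, zero_vertex m) \<in> graph_edges V (yoke_adj n m) ^^ k"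
    by blast
  from edge have adj: "yoke_adj n m v u"
    by (simp add: graph_edges_def)
  from Suc.IH[OF walk] obtain c where c: "int n dvd c + u ! 0" "flow_cost m u c \<le> int k"
    by blast
  from adj obtain i d
    where move: "i \<le> m" "d \<in> {1, -1}" "length u = m + 2" "v = yoke_move n m u i d"
    by (rule yoke_adj_imp_yoke_move)
  let ?c = "c - (if i = 0 then d else 0)"
  have "int n dvd ?c + v ! 0"
    using c(1) move yoke_move_admissible by blast
  moreover have "flow_cost m v ?c \<le> flow_cost m u c + 1"
    using move flow_cost_yoke_move[of u m i n d c] by auto
  ultimately show ?case
    using c(2) by (intro exI[of _ ?c]) auto
qed

lemma flow_cost_eq_0_if_prefix_sum_le:
  assumes "yoke_vertex n m v" "prefix_sum v m \<le> c" "c \<le> 0"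
  shows "flow_cost m v c = 0"
proof -
  have "c = prefix_sum v j" if "j \<le> m" for j
    using assms(2,3) prefix_sum_nonneg[OF assms(1) that] prefix_sum_mono[OF assms(1) that order_refl]
    by linarith
  then show ?thesis
    by (simp add: flow_cost_def)
qed

lemma yoke_move_decreasing_flow_cost:
  assumes "yoke_vertex n m v" "flow_cost m v c > 0"
  obtains i d where "i \<le> m" "d \<in> {1, -1}" "yoke_vertex n m (yoke_move n m v i d)"
    "flow_cost m (yoke_move n m v i d) (c - (if i = 0 then d else 0)) = flow_cost m v c - 1"
proof -
  have len: "length v = m + 2" and bits: "\<forall>k\<in>{1..m}. v ! k \<in> {0, 1}"
    using assms(1) by (auto simp: yoke_vertex_def)
  consider (inflow) "c > 0" | (outflow) "c < prefix_sum v m"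
    | (balanced) "c \<le> 0" "prefix_sum v m \<le> c"
    by linarith
  then show thesis
  proof cases
    case inflow
    obtain i where i: "i \<le> m" and zeros: "\<forall>k\<in>{1..i}. v ! k = 0"
      and one: "i < m \<longrightarrow> v ! Suc i = 1"
      using zeros_then_one[OF bits] by blast
    have "prefix_sum v i = 0"
      using zeros by (simp add: prefix_sum_def)
    with inflow have "flow_cost m (yoke_move n m v i 1) (c - (if i = 0 then 1 else 0)) =
        flow_cost m v c - 1"
      by (simp add: flow_cost_yoke_move[OF len i])
    moreover have "yoke_vertex n m (yoke_move n m v i 1)"
      by (rule yoke_vertex_yoke_move) (use assms i zeros one in auto)
    ultimately show thesis
      using i by (intro that) auto
  next
    case outflow
    obtain i where i: "i \<le> m" and zeros: "\<forall>k\<in>{i<..m}. v ! k = 0"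
      and one: "0 < i \<longrightarrow> v ! i = 1"
      using one_then_zeros[OF bits] by blast
    have "prefix_sum v i = prefix_sum v m"
      unfolding prefix_sum_def using i zeros by (intro sum.mono_neutral_left) auto
    with outflow have "flow_cost m (yoke_move n m v i (-1)) (c - (if i = 0 then -1 else 0)) =
        flow_cost m v c - 1"
      by (simp add: flow_cost_yoke_move[OF len i])
    moreover have "yoke_vertex n m (yoke_move n m v i (-1))"
      by (rule yoke_vertex_yoke_move) (use assms i zeros one in auto)
    ultimately show thesis
      using i by (intro that) auto
  next
    case balanced
    with assms show thesis
      using flow_cost_eq_0_if_prefix_sum_le by fastforce
  qed
qed

lemma walk_to_zero_vertex_of_flow_cost:
  assumes "yoke_vertex n m v" "int n dvd c + v ! 0" "flow_cost m v c = int k"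
  shows "(v, zero_vertex m) \<in> graph_edges (yoke_vertex n m) (yoke_adj n m) ^^ k"
  using assms
proof (induction k arbitrary: v c)
  case 0
  then show ?case
    using flow_cost_eq_0_imp_zero_vertex by simp
next
  case (Suc k)
  then have "flow_cost m v c > 0"
    by simp
  with Suc.prems(1) obtain i d where move: "i \<le> m" "d \<in> {1, -1}"
    and w: "yoke_vertex n m (yoke_move n m v i d)"
    and decrease: "flow_cost m (yoke_move n m v i d) (c - (if i = 0 then d else 0)) =
      flow_cost m v c - 1"
    by (rule yoke_move_decreasing_flow_cost)
  from decrease Suc.prems(3)
  have cost: "flow_cost m (yoke_move n m v i d) (c - (if i = 0 then d else 0)) = int k"
    by simp
  have len: "length v = m + 2"
    using Suc.prems(1) by (simp add: yoke_vertex_def)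
  have "yoke_adj n m v (yoke_move n m v i d)"
    using Suc.prems(1) move by (intro yoke_adj_yoke_move) (auto simp: yoke_vertex_def)
  with Suc.prems(1) w have "(v, yoke_move n m v i d) \<in> graph_edges (yoke_vertex n m) (yoke_adj n m)"
    by (simp add: graph_edges_def)
  moreover have "int n dvd c - (if i = 0 then d else 0) + yoke_move n m v i d ! 0"
    using Suc.prems(2) yoke_move_admissible[OF len move(1)] by blast
  ultimately show ?case
    using Suc.IH[OF w _ cost] by (blast intro: relpow_Suc_I2)
qed

theorem corollary5p33:
  fixes n m :: nat and v :: "int list"
  assumes "n \<ge> 1" and "m \<ge> 1" and "yoke_vertex n m v"
  shows "Z_dist n m v (zero_vertex m) = Y_dist n m v (zero_vertex m)"
proof (rule antisym)
  have edges: "graph_edges (yoke_vertex n m) (yoke_adj n m) \<subseteq>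
      graph_edges (dyoke_vertex n m) (yoke_adj n m)"
    unfolding graph_edges_def yoke_vertex_def dyoke_vertex_def by auto
  show "Z_dist n m v (zero_vertex m) \<le> Y_dist n m v (zero_vertex m)"
    unfolding Z_dist_def Y_dist_def
    using relpow_mono_subset[OF edges] by (intro graph_dist_le_by_walks) blast
  show "Y_dist n m v (zero_vertex m) \<le> Z_dist n m v (zero_vertex m)"
    unfolding Z_dist_def Y_dist_def
  proof (rule graph_dist_le_by_walks)
    fix k
    assume "(v, zero_vertex m) \<in> graph_edges (dyoke_vertex n m) (yoke_adj n m) ^^ k"
    then obtain c where c: "int n dvd c + v ! 0" "flow_cost m v c \<le> int k"
      using flow_cost_le_walk_length by blast
    have "flow_cost m v c = int (nat (flow_cost m v c))"
      using flow_cost_nonneg by simp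
    with assms(3) c(1) have "(v, zero_vertex m) \<in>
        graph_edges (yoke_vertex n m) (yoke_adj n m) ^^ nat (flow_cost m v c)"
      by (rule walk_to_zero_vertex_of_flow_cost)
    moreover have "nat (flow_cost m v c) \<le> k"
      using c(2) by linarith
    ultimately show "\<exists>k'\<le>k. (v, zero_vertex m) \<in> graph_edges (yoke_vertex n m) (yoke_adj n m) ^^ k'"
      by blast
  qed
qed

end
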